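(* $H_1(\Lambda_1(\mathbb{Q}\mathrm{Par}_2);\mathbb{Q})\cong\mathbb{Q}^4$.
   Context: The nonsymmetric operad $\mathrm{Par}_2$: $\mathrm{Par}_2((1))=\{1\}$, and for $m\ge2$, $\mathrm{Par}_2((m))=\{x_1^ax_2^b: a,b\ge1, a+b=m\}$. Partial composition: for $c=x_1^{a_1}x_2^{a_2}$ and $d$ a monomial of degree $j$ (or $d=1$ of degree 1), $c\circ_sd$ multiplies out by raising the exponent of the variable $x_l$ whose block contains $s$ (i.e. $l=1$ if $s\le a_1$, $l=2$ otherwise) by $j-1$; $1$ is a two-sided unit. $\Lambda_1(\mathbb{Q}\mathrm{Par}_2)=\bigoplus_{m\ge2}\mathbb{Q}\mathrm{Par}_2((m))$ with Lie bracket $[c,d]=\sum_{t=1}^{j}d\circ_tc-\sum_{s=1}^{k}c\circ_sd$ for $c$ of degree $k$, $d$ of degree $j$. $H_1$ is Lie algebra homology, i.e. the abelianization. *)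

theory Defs
  imports Complex_Main "HOL-Library.Numeral_Type" "HOL-Library.Function_Algebras"
begin

text \<open>Basis of Par_2: the pair (a,b) stands for the monomial x1^a x2^b (a,b >= 1),
  of arity a + b.  Elements of the Q-vector space Q Par_2 are finitely supported
  functions from pairs to rat.\<close>

definition smultQ :: "rat \<Rightarrow> ('i \<Rightarrow> rat) \<Rightarrow> ('i \<Rightarrow> rat)" where
  "smultQ r f = (\<lambda>i. r * f i)"

definition deltaQ :: "'i \<Rightarrow> ('i \<Rightarrow> rat)" where
  "deltaQ p = (\<lambda>i. if i = p then 1 else 0)"

definition par2_deg :: "nat \<times> nat \<Rightarrow> nat" where
  "par2_deg c = fst c + snd c"

text \<open>Partial composition c o_s d for monomials c = x1^a1 x2^a2 and d of degree j:
  raise the exponent of the variable whose block contains s by j - 1.\<close>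
definition par2_comp :: "nat \<times> nat \<Rightarrow> nat \<Rightarrow> nat \<times> nat \<Rightarrow> nat \<times> nat" where
  "par2_comp c s d =
     (if s \<le> fst c then (fst c + par2_deg d - 1, snd c)
      else (fst c, snd c + par2_deg d - 1))"

definition par2_brk :: "nat \<times> nat \<Rightarrow> nat \<times> nat \<Rightarrow> (nat \<times> nat \<Rightarrow> rat)" where
  "par2_brk c d =
     (\<Sum>t\<in>{1..par2_deg d}. deltaQ (par2_comp d t c))
     - (\<Sum>s\<in>{1..par2_deg c}. deltaQ (par2_comp c s d))"

text \<open>Underlying space of Lambda_1(Q Par_2) = direct sum over m >= 2 of Q Par_2((m)).\<close>
definition Lam1 :: "(nat \<times> nat \<Rightarrow> rat) set" where
  "Lam1 = {f. finite {i. f i \<noteq> 0} \<and> (\<forall>i. f i \<noteq> 0 \<longrightarrow> fst i \<ge> 1 \<and> snd i \<ge> 1)}"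

definition lie :: "(nat \<times> nat \<Rightarrow> rat) \<Rightarrow> (nat \<times> nat \<Rightarrow> rat) \<Rightarrow> (nat \<times> nat \<Rightarrow> rat)" where
  "lie x y = (\<Sum>c\<in>{i. x i \<noteq> 0}. \<Sum>d\<in>{i. y i \<noteq> 0}. smultQ (x c * y d) (par2_brk c d))"

definition derived :: "(nat \<times> nat \<Rightarrow> rat) set" where
  "derived = module.span smultQ {lie x y | x y. x \<in> Lam1 \<and> y \<in> Lam1}"

end

theory Submission
  imports Defs
begin

text \<open>The bracket of two monomials of degrees n and n' is homogeneous of degree n + n' - 1.
  Hence nothing of degree 2 or 3 is a bracket ([x1x2, x1x2] = 0), the two brackets of degree 4
  span x1^2x2^2 and x1x2^3 - x1^3x2, and in every degree n \<ge> 5 the brackets with x1x2,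
  x1x2^2, x1^2x2 already span all monomials: first the two extreme ones x1x2^(n-1) and
  x1^(n-1)x2 by an explicit elimination, then the others by climbing along
  [x1x2, x1^a x2^(n-1-a)].  So the abelianization has the basis x1x2, x1x2^2, x1^2x2 and the
  common class of x1x2^3 and x1^3x2.\<close>

interpretation Q: module smultQ
  by unfold_locales (auto simp: smultQ_def algebra_simps)

lemma sum_fun_apply: "(\<Sum>a\<in>A. f a) x = (\<Sum>a\<in>A. f a x)"
  by (induct A rule: infinite_finite_induct) auto

lemma finite_support_eq_sum_deltaQ:
  "finite {i. g i \<noteq> 0} \<Longrightarrow> g = (\<Sum>p\<in>{i. g i \<noteq> 0}. smultQ (g p) (deltaQ p))"
proof (rule ext)
  fix q assume fin: "finite {i. g i \<noteq> 0}"
  have "(\<Sum>p\<in>{i. g i \<noteq> 0}. smultQ (g p) (deltaQ p)) q = (\<Sum>p\<in>{i. g i \<noteq> 0}. if q = p then g p else 0)"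
    unfolding sum_fun_apply by (intro sum.cong) (auto simp: smultQ_def deltaQ_def)
  also have "\<dots> = g q" using fin by (simp add: sum.delta)
  finally show "g q = (\<Sum>p\<in>{i. g i \<noteq> 0}. smultQ (g p) (deltaQ p)) q" by simp
qed

lemma deltaQ_in_Lam1: "1 \<le> fst c \<Longrightarrow> 1 \<le> snd c \<Longrightarrow> deltaQ c \<in> Lam1"
  unfolding Lam1_def by (auto simp: deltaQ_def)

lemma Lam1_support_pos: "x \<in> Lam1 \<Longrightarrow> x c \<noteq> 0 \<Longrightarrow> 1 \<le> fst c \<and> 1 \<le> snd c"
  unfolding Lam1_def by (cases c) auto

lemma par2_brk_self: "par2_brk c c = 0"
  by (simp add: par2_brk_def)

lemma par2_deg_comp:
  "s \<in> {1..par2_deg c} \<Longrightarrow> par2_deg (par2_comp c s d) = par2_deg c + par2_deg d - 1"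
  by (auto simp: par2_comp_def par2_deg_def)

lemma par2_brk_eq_0_off_degree:
  assumes "par2_deg p \<noteq> par2_deg c + par2_deg d - 1"
  shows "par2_brk c d p = 0"
proof -
  have "deltaQ (par2_comp d t c) p = 0" if "t \<in> {1..par2_deg d}" for t
    using par2_deg_comp[OF that, of c] assms by (auto simp: deltaQ_def)
  moreover have "deltaQ (par2_comp c s d) p = 0" if "s \<in> {1..par2_deg c}" for s
    using par2_deg_comp[OF that, of d] assms by (auto simp: deltaQ_def)
  ultimately show ?thesis
    unfolding par2_brk_def by (simp add: sum_fun_apply)
qed

lemma sum_deltaQ_par2_comp:
  "(\<Sum>s\<in>{1..par2_deg (a,b)}. deltaQ (par2_comp (a,b) s d))
     = of_nat a * deltaQ (a + par2_deg d - 1, b) + of_nat b * deltaQ (a, b + par2_deg d - 1)"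
proof -
  have split: "{1..a+b} = {1..a} \<union> {a+1..a+b}" by auto
  have "(\<Sum>s\<in>{1..par2_deg (a,b)}. deltaQ (par2_comp (a,b) s d))
      = (\<Sum>s\<in>{1..a}. deltaQ (par2_comp (a,b) s d)) + (\<Sum>s\<in>{a+1..a+b}. deltaQ (par2_comp (a,b) s d))"
    unfolding par2_deg_def fst_conv snd_conv split by (rule sum.union_disjoint) auto
  also have "\<dots> = (\<Sum>s\<in>{1..a}. deltaQ (a + par2_deg d - 1, b)) + (\<Sum>s\<in>{a+1..a+b}. deltaQ (a, b + par2_deg d - 1))"
    by (intro arg_cong2[where f="(+)"] sum.cong) (auto simp: par2_comp_def)
  finally show ?thesis by simp
qed

lemma par2_brk_formula:
  "par2_brk (a,b) (a',b') = of_nat a' * deltaQ (a' + (a+b) - 1, b') + of_nat b' * deltaQ (a', b' + (a+b) - 1)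
     - of_nat a * deltaQ (a + (a'+b') - 1, b) - of_nat b * deltaQ (a, b + (a'+b') - 1)"
  unfolding par2_brk_def sum_deltaQ_par2_comp by (simp add: par2_deg_def)

lemma par2_brk_11_12: "par2_brk (1,1) (1,2) = deltaQ (2,2) + deltaQ (1,3) - deltaQ (3,1)"
  by (simp add: par2_brk_formula eval_nat_numeral)

lemma par2_brk_11_21: "par2_brk (1,1) (2,1) = deltaQ (3,1) + deltaQ (2,2) - deltaQ (1,3)"
  by (simp add: par2_brk_formula eval_nat_numeral)

text \<open>Coordinates of x1x2, x1x2^2, x1^2x2, and of x1x2^3 + x1^3x2 modulo x1^2x2^2 and
  x1x2^3 - x1^3x2.\<close>
definition abel :: "(nat \<times> nat \<Rightarrow> rat) \<Rightarrow> (4 \<Rightarrow> rat)" where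
  "abel x = (\<lambda>i. if i = 0 then x (1,1) else if i = 1 then x (1,2) else if i = 2 then x (2,1)
                 else x (1,3) + x (3,1))"

lemma exhaust_4_from_0: "(i::4) = 0 \<or> i = 1 \<or> i = 2 \<or> i = 3"
proof (cases i)
  case (of_int z)
  then have "z = 0 \<or> z = 1 \<or> z = 2 \<or> z = 3" by auto
  then show ?thesis using of_int by auto
qed

lemma abel_eq_0_iff:
  "abel x = 0 \<longleftrightarrow> x (1,1) = 0 \<and> x (1,2) = 0 \<and> x (2,1) = 0 \<and> x (1,3) + x (3,1) = 0"
proof
  assume "abel x = 0"
  then have "abel x 0 = 0" "abel x 1 = 0" "abel x 2 = 0" "abel x 3 = 0" by simp_all
  then show "x (1,1) = 0 \<and> x (1,2) = 0 \<and> x (2,1) = 0 \<and> x (1,3) + x (3,1) = 0"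
    by (simp add: abel_def split: if_splits)
next
  assume coords: "x (1,1) = 0 \<and> x (1,2) = 0 \<and> x (2,1) = 0 \<and> x (1,3) + x (3,1) = 0"
  show "abel x = 0"
  proof
    fix i :: 4
    show "abel x i = 0 i" using exhaust_4_from_0[of i] coords by (auto simp: abel_def)
  qed
qed

lemma abel_add: "abel (x + y) = abel x + abel y"
  by (simp add: abel_def fun_eq_iff)

lemma abel_smultQ: "abel (smultQ r x) = smultQ r (abel x)"
  by (simp add: abel_def smultQ_def fun_eq_iff algebra_simps)

lemma subspace_abel_kernel: "Q.subspace {x. abel x = 0}"
  unfolding Q.subspace_def
  by (auto simp: abel_add abel_smultQ abel_eq_0_iff smultQ_def simp flip: distrib_left)

lemma abel_par2_brk:
  assumes "1 \<le> a" "1 \<le> b" "1 \<le> a'" "1 \<le> b'"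
  shows "abel (par2_brk (a,b) (a',b')) = 0"
proof -
  have low: "par2_brk (a,b) (a',b') p = 0" if "par2_deg p \<le> 3" for p
  proof (cases "(a,b) = (1,1) \<and> (a',b') = (1,1)")
    case False
    then have "a + b + (a' + b') \<ge> 5"
      using assms by (cases "a = 1"; cases "b = 1"; cases "a' = 1") auto
    then show ?thesis using that by (intro par2_brk_eq_0_off_degree) (auto simp: par2_deg_def)
  qed (simp add: par2_brk_self)
  have "par2_brk (a,b) (a',b') (1,3) + par2_brk (a,b) (a',b') (3,1) = 0"
  proof (cases "a + b + (a' + b') = 5")
    case True
    then have "(a,b) = (1,1) \<and> ((a',b') = (1,2) \<or> (a',b') = (2,1))
             \<or> (a',b') = (1,1) \<and> ((a,b) = (1,2) \<or> (a,b) = (2,1))"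
      using assms by (cases "a = 1"; cases "b = 1"; cases "a' = 1") auto
    then show ?thesis
      by (elim disjE conjE) (simp_all add: par2_brk_formula deltaQ_def)
  qed (simp add: par2_brk_eq_0_off_degree par2_deg_def)
  then show ?thesis
    unfolding abel_eq_0_iff using low by (simp add: par2_deg_def)
qed

lemma derived_subset_abel_kernel: "derived \<subseteq> {x. abel x = 0}"
  unfolding derived_def
proof (rule Q.span_minimal[OF _ subspace_abel_kernel], safe)
  fix x y assume "x \<in> Lam1" "y \<in> Lam1"
  then have "par2_brk c d \<in> {x. abel x = 0}" if "x c \<noteq> 0" "y d \<noteq> 0" for c d
    using that Lam1_support_pos[of x c] Lam1_support_pos[of y d]
    by (cases c, cases d) (simp add: abel_par2_brk)
  then show "abel (lie x y) = 0"
    unfolding lie_def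
    by (intro Q.subspace_sum[OF subspace_abel_kernel, simplified]
        Q.subspace_scale[OF subspace_abel_kernel, simplified]) auto
qed

lemma par2_brk_in_derived:
  assumes "1 \<le> a" "1 \<le> b" "1 \<le> a'" "1 \<le> b'"
  shows "par2_brk (a,b) (a',b') \<in> derived"
proof -
  have "deltaQ (a,b) \<in> Lam1" "deltaQ (a',b') \<in> Lam1"
    using assms by (auto intro: deltaQ_in_Lam1)
  moreover have "par2_brk (a,b) (a',b') = lie (deltaQ (a,b)) (deltaQ (a',b'))"
    unfolding lie_def by (simp add: deltaQ_def smultQ_def)
  ultimately have "par2_brk (a,b) (a',b') \<in> {lie x y | x y. x \<in> Lam1 \<and> y \<in> Lam1}"
    by blast
  then show ?thesis unfolding derived_def by (rule Q.span_base)
qed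

lemma derived_add: "x \<in> derived \<Longrightarrow> y \<in> derived \<Longrightarrow> x + y \<in> derived"
  unfolding derived_def by (rule Q.span_add)

lemma derived_diff: "x \<in> derived \<Longrightarrow> y \<in> derived \<Longrightarrow> x - y \<in> derived"
  unfolding derived_def by (rule Q.span_diff)

lemma derived_uminus: "x \<in> derived \<Longrightarrow> - x \<in> derived"
  unfolding derived_def by (rule Q.span_neg)

lemma derived_smultQ: "x \<in> derived \<Longrightarrow> smultQ r x \<in> derived"
  unfolding derived_def by (rule Q.span_scale)

lemma derived_of_nat_mult:
  assumes "x \<in> derived"
  shows "of_nat k * x \<in> derived"
proof -
  have "of_nat k * x = smultQ (of_nat k) x" by (simp add: smultQ_def fun_eq_iff)
  then show ?thesis using derived_smultQ[OF assms] by simp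
qed

lemma derived_numeral_mult: "x \<in> derived \<Longrightarrow> numeral k * x \<in> derived"
  using derived_of_nat_mult[of x "numeral k"] by (simp only: of_nat_numeral)

lemma derived_of_nat_mult_cancel:
  assumes "of_nat k * x \<in> derived" and "0 < k"
  shows "x \<in> derived"
proof -
  have "smultQ (1 / of_nat k) (of_nat k * x) = x"
    using \<open>0 < k\<close> by (simp add: smultQ_def fun_eq_iff)
  then show ?thesis using derived_smultQ[OF assms(1)] by metis
qed

lemma deltaQ_deg4_in_derived:
  "deltaQ (2,2) \<in> derived" "deltaQ (1,3) - deltaQ (3,1) \<in> derived"
proof -
  define p q r where "p = deltaQ (2::nat,2::nat)" and "q = deltaQ (1::nat,3::nat)" and "r = deltaQ (3::nat,1::nat)"
  have brk: "p + q - r \<in> derived" "r + p - q \<in> derived"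
    using par2_brk_in_derived[of 1 1 1 2] par2_brk_in_derived[of 1 1 2 1]
    unfolding p_def q_def r_def par2_brk_11_12 par2_brk_11_21 by simp_all
  have "of_nat 2 * p = (p + q - r) + (r + p - q)" "of_nat 2 * (q - r) = (p + q - r) - (r + p - q)"
    by (simp_all add: algebra_simps mult_2)
  then have "of_nat 2 * p \<in> derived" "of_nat 2 * (q - r) \<in> derived"
    using derived_add[OF brk] derived_diff[OF brk] by simp_all
  then show "deltaQ (2,2) \<in> derived" "deltaQ (1,3) - deltaQ (3,1) \<in> derived"
    unfolding p_def q_def r_def by (auto intro: derived_of_nat_mult_cancel[of 2])
qed

lemma deltaQ_deg5_in_derived:
  "deltaQ (1,4) \<in> derived" "deltaQ (2,3) \<in> derived" "deltaQ (3,2) \<in> derived" "deltaQ (4,1) \<in> derived"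
proof -
  define x1 x2 x3 x4 where "x1 = deltaQ (1::nat,4::nat)" and "x2 = deltaQ (2::nat,3::nat)"
    and "x3 = deltaQ (3::nat,2::nat)" and "x4 = deltaQ (4::nat,1::nat)"
  define b1 b2 b3 b4 where "b1 = par2_brk (1,1) (1,3)" and "b2 = par2_brk (1,1) (2,2)"
    and "b3 = par2_brk (1,1) (3,1)" and "b4 = par2_brk (1,2) (2,1)"
  have brk: "b1 \<in> derived" "b2 \<in> derived" "b3 \<in> derived" "b4 \<in> derived"
    unfolding b1_def b2_def b3_def b4_def by (simp_all add: par2_brk_in_derived)
  have brk_eqs: "b1 = x2 + 2*x1 - x4" "b2 = 2*x3 + 2*x2 - x4 - x1"
    "b3 = x3 + 2*x4 - x1" "b4 = 2*x4 + x2 - x3 - 2*x1"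
    unfolding x1_def x2_def x3_def x4_def b1_def b2_def b3_def b4_def
    by (simp_all add: par2_brk_formula eval_nat_numeral)
  have "of_nat 30 * x1 = 13*b1 - 5*b2 + 7*b3 - 3*b4"
    "of_nat 30 * x2 = 11*b1 + 5*b2 - b3 + 9*b4"
    "of_nat 30 * x3 = 5*b2 + 11*b3 - b1 - 9*b4"
    "of_nat 30 * x4 = 7*b1 - 5*b2 + 13*b3 + 3*b4"
    unfolding brk_eqs by (simp_all add: algebra_simps)
  moreover have "13*b1 - 5*b2 + 7*b3 - 3*b4 \<in> derived" "11*b1 + 5*b2 - b3 + 9*b4 \<in> derived"
    "5*b2 + 11*b3 - b1 - 9*b4 \<in> derived" "7*b1 - 5*b2 + 13*b3 + 3*b4 \<in> derived"
    by (intro derived_add derived_diff derived_numeral_mult brk)+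
  ultimately have "of_nat 30 * x1 \<in> derived" "of_nat 30 * x2 \<in> derived"
    "of_nat 30 * x3 \<in> derived" "of_nat 30 * x4 \<in> derived" by simp_all
  then show "deltaQ (1,4) \<in> derived" "deltaQ (2,3) \<in> derived" "deltaQ (3,2) \<in> derived" "deltaQ (4,1) \<in> derived"
    unfolding x1_def x2_def x3_def x4_def by (auto intro: derived_of_nat_mult_cancel[of 30])
qed

text \<open>In degree m + 6: eliminating the four inner monomials from these six brackets leaves
  (m+2)(m+7)(u+v) and (m+1)(m+6)(u-v).  In degree 5 (formally m = -1) the second coefficient
  vanishes, which is why that degree is treated separately.\<close>
lemma deltaQ_extreme_in_derived:
  "deltaQ (1, m+5) \<in> derived" "deltaQ (m+5, 1) \<in> derived"
proof -
  define u v where "u = deltaQ (1::nat, m+5)" and "v = deltaQ (m+5, 1::nat)"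
  define e2 e3 f2 f3 where "e2 = deltaQ (2::nat, m+4)" and "e3 = deltaQ (3::nat, m+3)"
    and "f2 = deltaQ (m+4, 2::nat)" and "f3 = deltaQ (m+3, 3::nat)"
  define b1 b2 b3 b4 b5 b6 where "b1 = par2_brk (1,1) (1,m+4)" and "b2 = par2_brk (1,1) (m+4,1)"
    and "b3 = par2_brk (1,2) (1,m+3)" and "b4 = par2_brk (2,1) (m+3,1)"
    and "b5 = par2_brk (1,1) (2,m+3)" and "b6 = par2_brk (1,1) (m+3,2)"
  note defs = u_def v_def e2_def e3_def f2_def f3_def b1_def b2_def b3_def b4_def b5_def b6_def
  have brk: "b1 \<in> derived" "b2 \<in> derived" "b3 \<in> derived" "b4 \<in> derived" "b5 \<in> derived" "b6 \<in> derived"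
    unfolding defs by (simp_all add: par2_brk_in_derived)
  have brk_eqs: "b1 = e2 + of_nat (m+4)*u - v - u" "b2 = of_nat (m+4)*v + f2 - v - u"
    "b3 = e3 + of_nat (m+3)*u - f2 - 2*u" "b4 = of_nat (m+3)*v + f3 - 2*v - e2"
    "b5 = 2*e3 + of_nat (m+3)*e2 - v - u" "b6 = of_nat (m+3)*f2 + 2*f3 - v - u"
    unfolding defs by (simp_all add: par2_brk_formula eval_nat_numeral)
  have "of_nat ((m+2)*(m+7)) * (u + v)
          = - (b5 - 2*b3 - 2*b2 - of_nat (m+3)*b1) - (b6 - 2*b4 - 2*b1 - of_nat (m+3)*b2)"
    "of_nat ((m+1)*(m+6)) * (u - v)
          = (b6 - 2*b4 - 2*b1 - of_nat (m+3)*b2) - (b5 - 2*b3 - 2*b2 - of_nat (m+3)*b1)"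
    unfolding brk_eqs by (simp_all add: algebra_simps)
  moreover have "- (b5 - 2*b3 - 2*b2 - of_nat (m+3)*b1) - (b6 - 2*b4 - 2*b1 - of_nat (m+3)*b2) \<in> derived"
    "(b6 - 2*b4 - 2*b1 - of_nat (m+3)*b2) - (b5 - 2*b3 - 2*b2 - of_nat (m+3)*b1) \<in> derived"
    by (intro derived_uminus derived_diff derived_numeral_mult derived_of_nat_mult brk)+
  ultimately have "of_nat ((m+2)*(m+7)) * (u + v) \<in> derived" "of_nat ((m+1)*(m+6)) * (u - v) \<in> derived"
    by (simp_all only:)
  then have sum: "u + v \<in> derived" and diff: "u - v \<in> derived"
    by (simp_all add: derived_of_nat_mult_cancel del: of_nat_mult of_nat_add)
  have "of_nat 2 * u = (u + v) + (u - v)" "of_nat 2 * v = (u + v) - (u - v)"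
    by (simp_all add: algebra_simps mult_2)
  then have "of_nat 2 * u \<in> derived" "of_nat 2 * v \<in> derived"
    using derived_add[OF sum diff] derived_diff[OF sum diff] by simp_all
  then show "deltaQ (1, m+5) \<in> derived" "deltaQ (m+5, 1) \<in> derived"
    unfolding u_def v_def by (auto intro: derived_of_nat_mult_cancel[of 2])
qed

lemma deltaQ_deg_ge6_in_derived:
  "1 \<le> a \<Longrightarrow> a \<le> m+5 \<Longrightarrow> deltaQ (a, m+6-a) \<in> derived"
proof (induction a rule: nat_induct_at_least)
  case base
  then show ?case using deltaQ_extreme_in_derived(1)[of m] by (simp add: add.commute)
next
  case (Suc a)
  have "par2_brk (1,1) (a, m+5-a) = of_nat a * deltaQ (Suc a, m+5-a) + of_nat (m+5-a) * deltaQ (a, m+6-a)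
          - deltaQ (m+5, 1) - deltaQ (1, m+5)"
  proof -
    have "Suc (m+5-a) = m+6-a" using Suc.prems by auto
    then show ?thesis using Suc.prems by (simp add: par2_brk_formula add.commute)
  qed
  then have "of_nat a * deltaQ (Suc a, m+5-a)
      = par2_brk (1,1) (a, m+5-a) - of_nat (m+5-a) * deltaQ (a, m+6-a) + deltaQ (m+5, 1) + deltaQ (1, m+5)"
    by (simp add: algebra_simps)
  also have "\<dots> \<in> derived"
    using Suc by (intro derived_add derived_diff derived_of_nat_mult par2_brk_in_derived
        deltaQ_extreme_in_derived) auto
  finally have "deltaQ (Suc a, m+5-a) \<in> derived"
    by (rule derived_of_nat_mult_cancel) (use Suc.hyps in simp)
  moreover have "m+5-a = m+6 - Suc a" by simp
  ultimately show ?case by simp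
qed

lemma deltaQ_in_derived:
  assumes "1 \<le> a" "1 \<le> b" "5 \<le> a + b"
  shows "deltaQ (a,b) \<in> derived"
proof (cases "a + b = 5")
  case True
  then have "(a,b) = (1,4) \<or> (a,b) = (2,3) \<or> (a,b) = (3,2) \<or> (a,b) = (4,1)"
    using assms by (cases "a = 1"; cases "a = 2"; cases "a = 3") auto
  then show ?thesis using deltaQ_deg5_in_derived by auto
next
  case False
  then show ?thesis using assms deltaQ_deg_ge6_in_derived[of a "a+b-6"] by simp
qed

lemma abel_kernel_subset_derived:
  assumes x: "x \<in> Lam1" and abel: "abel x = 0"
  shows "x \<in> derived"
proof -
  define g where "g = x - smultQ (x (1,3)) (deltaQ (1,3) - deltaQ (3,1)) - smultQ (x (2,2)) (deltaQ (2,2))"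
  have coords: "x (1,1) = 0" "x (1,2) = 0" "x (2,1) = 0" "x (1,3) + x (3,1) = 0"
    using abel unfolding abel_eq_0_iff by simp_all
  then have g_apply: "g p = (if p \<in> {(1,3), (3,1), (2,2)} then 0 else x p)" for p
    unfolding g_def by (auto simp: smultQ_def deltaQ_def)
  have "finite {i. g i \<noteq> 0}"
    using x unfolding Lam1_def g_apply by (auto elim: rev_finite_subset)
  moreover have "deltaQ p \<in> derived" if "g p \<noteq> 0" for p
  proof -
    obtain a b where p: "p = (a,b)" by fastforce
    have "x p \<noteq> 0" "p \<notin> {(1,3), (3,1), (2,2)}" using that g_apply[of p] by (auto split: if_splits)
    then have "p \<notin> {(1,1), (1,2), (2,1), (1,3), (3,1), (2,2)}" using coords by auto
    moreover have "1 \<le> a" "1 \<le> b" using Lam1_support_pos[OF x \<open>x p \<noteq> 0\<close>] p by auto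
    ultimately have "5 \<le> a + b"
      unfolding p by (cases "a = 1"; cases "a = 2"; cases "a = 3") auto
    then show ?thesis unfolding p using \<open>1 \<le> a\<close> \<open>1 \<le> b\<close> by (rule deltaQ_in_derived[rotated 2])
  qed
  ultimately have "g \<in> derived"
    by (subst finite_support_eq_sum_deltaQ) (auto simp: derived_def intro!: Q.span_sum Q.span_scale)
  moreover have "x = g + smultQ (x (1,3)) (deltaQ (1,3) - deltaQ (3,1)) + smultQ (x (2,2)) (deltaQ (2,2))"
    unfolding g_def by simp
  ultimately show ?thesis
    using deltaQ_deg4_in_derived by (metis derived_add derived_smultQ)
qed

lemma abel_Lam1: "abel ` Lam1 = UNIV"
proof (intro set_eqI iffI)
  fix w :: "4 \<Rightarrow> rat"
  define x where "x = (\<lambda>p::nat \<times> nat. if p = (1,1) then w 0 else if p = (1,2) then w 1 else if p = (2,1) then w 2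
      else if p = (1,3) then w 3 else 0)"
  have "{i. x i \<noteq> 0} \<subseteq> {(1,1),(1,2),(2,1),(1,3)}" unfolding x_def by auto
  then have "finite {i. x i \<noteq> 0}" by (rule finite_subset) simp
  moreover have "\<forall>i. x i \<noteq> 0 \<longrightarrow> 1 \<le> fst i \<and> 1 \<le> snd i" unfolding x_def by auto
  ultimately have "x \<in> Lam1" unfolding Lam1_def by blast
  moreover have "abel x = w"
  proof
    fix i :: 4
    show "abel x i = w i" using exhaust_4_from_0[of i] unfolding abel_def x_def by auto
  qed
  ultimately show "w \<in> abel ` Lam1" by blast
qed simp

theorem corollary6p2:
  "\<exists>\<phi> :: (nat \<times> nat \<Rightarrow> rat) \<Rightarrow> (4 \<Rightarrow> rat).
     (\<forall>x\<in>Lam1. \<forall>y\<in>Lam1. \<phi> (x + y) = \<phi> x + \<phi> y) \<and>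
     (\<forall>x\<in>Lam1. \<forall>r. \<phi> (smultQ r x) = smultQ r (\<phi> x)) \<and>
     \<phi> ` Lam1 = UNIV \<and>
     (\<forall>x\<in>Lam1. \<phi> x = 0 \<longleftrightarrow> x \<in> derived)"
proof (intro exI[of _ abel] conjI ballI allI)
  fix x assume "x \<in> Lam1"
  then show "abel x = 0 \<longleftrightarrow> x \<in> derived"
    using abel_kernel_subset_derived derived_subset_abel_kernel by blast
qed (simp_all add: abel_add abel_smultQ abel_Lam1)

end
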